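(* The set function $f:2^{[n-1]}\to\mathbb R$ is non-negative, non-decreasing and submodular.
   Context: Independent instance: each action $i\in[n]$ has a type drawn independently over types $j\in[m]$, type $j$ having probability $q_{ij}$, receiver value $\rho_{ij}$ and sender value $\xi_{ij}$. $\rho_E=\max_i\sum_jq_{ij}\rho_{ij}$. For $z\in[0,1]$, $g_i(z)=\max\{\sum_{j=1}^mx_{ij}\xi_{ij}:\sum_jx_{ij}\le z,\ \sum_jx_{ij}\rho_{ij}\ge\rho_E\sum_jx_{ij},\ x_{ij}\in[0,q_{ij}]\ \forall j\}$. For $S\subseteq[n-1]$, $f(S)=\max\{\sum_{i\in S\cup\{n\}}g_i(z_i):\sum_{i\in S\cup\{n\}}z_i\le1,\ z_i\ge0\ \forall i\in S\cup\{n\}\}$. *)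

theory Defs
  imports Complex_Main
begin

text \<open>Actions are indexed by {1..n}, types by {1..m}.
  q i j = probability that action i has type j, rho i j receiver value, xi i j sender value.\<close>

definition rhoE :: "nat \<Rightarrow> nat \<Rightarrow> (nat \<Rightarrow> nat \<Rightarrow> real) \<Rightarrow> (nat \<Rightarrow> nat \<Rightarrow> real) \<Rightarrow> real" where
  "rhoE n m q rho = Max ((\<lambda>i. \<Sum>j\<in>{1..m}. q i j * rho i j) ` {1..n})"

definition gfun :: "nat \<Rightarrow> nat \<Rightarrow> (nat \<Rightarrow> nat \<Rightarrow> real) \<Rightarrow> (nat \<Rightarrow> nat \<Rightarrow> real)
    \<Rightarrow> (nat \<Rightarrow> nat \<Rightarrow> real) \<Rightarrow> nat \<Rightarrow> real \<Rightarrow> real" where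
  "gfun n m q rho xi i z = Sup {(\<Sum>j\<in>{1..m}. x j * xi i j) | x :: nat \<Rightarrow> real.
      (\<Sum>j\<in>{1..m}. x j) \<le> z \<and>
      (\<Sum>j\<in>{1..m}. x j * rho i j) \<ge> rhoE n m q rho * (\<Sum>j\<in>{1..m}. x j) \<and>
      (\<forall>j\<in>{1..m}. 0 \<le> x j \<and> x j \<le> q i j)}"

definition ffun :: "nat \<Rightarrow> nat \<Rightarrow> (nat \<Rightarrow> nat \<Rightarrow> real) \<Rightarrow> (nat \<Rightarrow> nat \<Rightarrow> real)
    \<Rightarrow> (nat \<Rightarrow> nat \<Rightarrow> real) \<Rightarrow> nat set \<Rightarrow> real" where
  "ffun n m q rho xi S = Sup {(\<Sum>i\<in>S \<union> {n}. gfun n m q rho xi i (z i)) | z :: nat \<Rightarrow> real.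
      (\<Sum>i\<in>S \<union> {n}. z i) \<le> 1 \<and> (\<forall>i\<in>S \<union> {n}. 0 \<le> z i)}"

end

theory Submission
  imports Defs "HOL-Analysis.Convex"
begin

text \<open>
  f(S) is the best value of splitting a unit budget among the functions g_i, i \<in> S \<union> {n}, and
  each g_i is the value of a linear program whose right-hand side is z; hence g_i is non-negative,
  bounded and concave on [0, \<infinity>). Non-negativity and monotonicity of f follow by giving new
  actions budget 0. For submodularity take a budget split u for S \<union> T and w for S \<inter> T. On the
  common part S \<inter> T replace u and w by the mixtures \<theta>u + (1-\<theta>)w and (1-\<theta>)u + \<theta>w; the weight
  \<theta> can be chosen so that the resulting splits for S and for T both respect the unit budget, and
  by concavity the two mixtures together are worth at least u and w together.
\<close>

definition budget_value :: "('a \<Rightarrow> real \<Rightarrow> real) \<Rightarrow> 'a set \<Rightarrow> real" where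
  "budget_value G A = Sup {(\<Sum>i\<in>A. G i (z i)) | z. (\<Sum>i\<in>A. z i) \<le> 1 \<and> (\<forall>i\<in>A. 0 \<le> z i)}"

lemma budget_value_upper:
  assumes "finite A" and bounded: "\<And>i. i \<in> A \<Longrightarrow> bdd_above (G i ` {0..})"
    and "(\<Sum>i\<in>A. z i) \<le> 1" "\<forall>i\<in>A. 0 \<le> z i"
  shows "(\<Sum>i\<in>A. G i (z i)) \<le> budget_value G A"
proof -
  have "\<forall>i\<in>A. \<exists>M. \<forall>y\<ge>0. G i y \<le> M"
    using bounded by (fastforce simp: bdd_above_def)
  then obtain M where M: "\<And>i y. i \<in> A \<Longrightarrow> 0 \<le> y \<Longrightarrow> G i y \<le> M i"
    by metis
  have "bdd_above {(\<Sum>i\<in>A. G i (z i)) | z. (\<Sum>i\<in>A. z i) \<le> 1 \<and> (\<forall>i\<in>A. 0 \<le> z i)}"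
    unfolding bdd_above_def by (auto intro!: exI[of _ "\<Sum>i\<in>A. M i"] sum_mono M)
  then show ?thesis
    unfolding budget_value_def using assms(3,4) by (auto intro!: cSup_upper)
qed

lemma budget_value_least:
  assumes "\<And>z. (\<Sum>i\<in>A. z i) \<le> 1 \<Longrightarrow> \<forall>i\<in>A. 0 \<le> z i \<Longrightarrow> (\<Sum>i\<in>A. G i (z i)) \<le> c"
  shows "budget_value G A \<le> c"
  unfolding budget_value_def
proof (rule cSup_least)
  show "{(\<Sum>i\<in>A. G i (z i)) | z. (\<Sum>i\<in>A. z i) \<le> 1 \<and> (\<forall>i\<in>A. 0 \<le> z i)} \<noteq> {}"
    by (auto intro!: exI[of _ "\<lambda>_. 0"])
qed (use assms in auto)

lemma budget_value_nonneg:
  assumes "finite A" "\<And>i. i \<in> A \<Longrightarrow> bdd_above (G i ` {0..})" "\<And>i. i \<in> A \<Longrightarrow> 0 \<le> G i 0"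
  shows "0 \<le> budget_value G A"
proof -
  have "0 \<le> (\<Sum>i\<in>A. G i 0)"
    using assms(3) by (rule sum_nonneg)
  also have "\<dots> \<le> budget_value G A"
    using budget_value_upper[OF assms(1,2), where z="\<lambda>_. 0"] by simp
  finally show ?thesis .
qed

lemma budget_value_mono:
  assumes "A \<subseteq> B" "finite B" "\<And>i. i \<in> B \<Longrightarrow> bdd_above (G i ` {0..})"
    and "\<And>i. i \<in> B - A \<Longrightarrow> 0 \<le> G i 0"
  shows "budget_value G A \<le> budget_value G B"
proof (rule budget_value_least)
  fix z :: "'a \<Rightarrow> real" assume z: "(\<Sum>i\<in>A. z i) \<le> 1" "\<forall>i\<in>A. 0 \<le> z i"
  define z' where "z' i = (if i \<in> A then z i else 0)" for i
  have split: "(\<Sum>i\<in>B. h i) = (\<Sum>i\<in>B - A. h i) + (\<Sum>i\<in>A. h i)" for h :: "'a \<Rightarrow> real"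
    using sum.subset_diff[OF assms(1,2)] .
  have "(\<Sum>i\<in>A. G i (z i)) \<le> (\<Sum>i\<in>B - A. G i 0) + (\<Sum>i\<in>A. G i (z i))"
    using assms(4) sum_nonneg[of "B - A" "\<lambda>i. G i 0"] by simp
  also have "\<dots> = (\<Sum>i\<in>B. G i (z' i))"
    by (subst split) (simp add: z'_def)
  also have "\<dots> \<le> budget_value G B"
    by (rule budget_value_upper) (use assms(2,3) z split[of z'] in \<open>auto simp: z'_def\<close>)
  finally show "(\<Sum>i\<in>A. G i (z i)) \<le> budget_value G B" .
qed

text \<open>The weight \<open>t\<close> is chosen to make the first budget tight when neither endpoint works.\<close>

lemma exchange_weight_exists:
  fixes a b c d :: real
  assumes "0 \<le> a" "0 \<le> b" "0 \<le> c" "0 \<le> d" "a + b + c \<le> 1" "d \<le> 1"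
  shows "\<exists>t\<in>{0..1}. a + t * c + (1 - t) * d \<le> 1 \<and> b + (1 - t) * c + t * d \<le> 1"
proof (cases "d \<le> c \<or> a + d \<le> 1")
  case True
  then show ?thesis
    using assms by (elim disjE; intro bexI[of _ 1] bexI[of _ 0]) auto
next
  case False
  define t where "t = (a + d - 1) / (d - c)"
  have t_eq: "t * (d - c) = a + d - 1"
    using False by (simp add: t_def)
  have "0 \<le> t" "t \<le> 1"
    using False assms by (auto simp: t_def field_simps)
  moreover have "a + t * c + (1 - t) * d = 1" "b + (1 - t) * c + t * d = a + b + c + d - 1"
    using t_eq by (simp_all add: algebra_simps)
  ultimately show ?thesis
    using assms by (intro bexI[of _ t]) auto
qed

definition mix_on :: "'a set \<Rightarrow> real \<Rightarrow> ('a \<Rightarrow> real) \<Rightarrow> ('a \<Rightarrow> real) \<Rightarrow> 'a \<Rightarrow> real" where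
  "mix_on C t u w i = (if i \<in> C then t * u i + (1 - t) * w i else u i)"

lemma sum_mix_on:
  assumes "finite A"
  shows "(\<Sum>i\<in>A. mix_on C t u w i)
    = (\<Sum>i\<in>A - C. u i) + t * (\<Sum>i\<in>A \<inter> C. u i) + (1 - t) * (\<Sum>i\<in>A \<inter> C. w i)"
  using sum.Int_Diff[OF assms, of "mix_on C t u w" C]
  by (simp add: mix_on_def sum.distrib sum_distrib_left)

lemma sum_comp_mix_on:
  assumes "finite A"
  shows "(\<Sum>i\<in>A. G i (mix_on C t u w i))
    = (\<Sum>i\<in>A - C. G i (u i)) + (\<Sum>i\<in>A \<inter> C. G i (t * u i + (1 - t) * w i))"
  using sum.Int_Diff[OF assms, of "\<lambda>i. G i (mix_on C t u w i)" C]
  by (simp add: mix_on_def add.commute)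

lemma concave_on_add_le_mix:
  fixes f :: "real \<Rightarrow> real"
  assumes "concave_on {0..} f" "0 \<le> x" "0 \<le> y" "0 \<le> t" "t \<le> 1"
  shows "f x + f y \<le> f (t * x + (1 - t) * y) + f ((1 - t) * x + t * y)"
proof -
  have "(1 - t) * f y + t * f x \<le> f (t * x + (1 - t) * y)"
    using concave_onD[OF assms(1), of t y x] assms(2-5) by (simp add: add.commute)
  moreover have "(1 - t) * f x + t * f y \<le> f ((1 - t) * x + t * y)"
    using concave_onD[OF assms(1), of t x y] assms(2-5) by simp
  ultimately show ?thesis
    by (simp add: algebra_simps)
qed

lemma budget_value_exchange:
  assumes fin: "finite A" "finite B"
    and bounded: "\<And>i. i \<in> A \<union> B \<Longrightarrow> bdd_above (G i ` {0..})"
    and concave: "\<And>i. i \<in> A \<inter> B \<Longrightarrow> concave_on {0..} (G i)"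
    and u: "(\<Sum>i\<in>A \<union> B. u i) \<le> 1" "\<forall>i\<in>A \<union> B. 0 \<le> u i"
    and w: "(\<Sum>i\<in>A \<inter> B. w i) \<le> 1" "\<forall>i\<in>A \<inter> B. 0 \<le> w i"
  shows "(\<Sum>i\<in>A \<union> B. G i (u i)) + (\<Sum>i\<in>A \<inter> B. G i (w i)) \<le> budget_value G A + budget_value G B"
proof -
  have "0 \<le> (\<Sum>i\<in>A - B. u i)" "0 \<le> (\<Sum>i\<in>B - A. u i)" "0 \<le> (\<Sum>i\<in>A \<inter> B. u i)"
    "0 \<le> (\<Sum>i\<in>A \<inter> B. w i)"
    using u(2) w(2) by (auto intro!: sum_nonneg)
  moreover have "(\<Sum>i\<in>A - B. u i) + (\<Sum>i\<in>B - A. u i) + (\<Sum>i\<in>A \<inter> B. u i) \<le> 1"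
    using u(1) sum.union_diff2[OF fin, of u] by simp
  ultimately obtain t where t: "0 \<le> t" "t \<le> 1"
    and budget_A: "(\<Sum>i\<in>A - B. u i) + t * (\<Sum>i\<in>A \<inter> B. u i) + (1 - t) * (\<Sum>i\<in>A \<inter> B. w i) \<le> 1"
    and budget_B: "(\<Sum>i\<in>B - A. u i) + (1 - t) * (\<Sum>i\<in>A \<inter> B. u i) + t * (\<Sum>i\<in>A \<inter> B. w i) \<le> 1"
    using exchange_weight_exists[OF _ _ _ _ _ w(1)] by (metis atLeastAtMost_iff)
  define a where "a = mix_on B t u w"
  define b where "b = mix_on A (1 - t) u w"
  have "(\<Sum>i\<in>A. a i) \<le> 1" "\<forall>i\<in>A. 0 \<le> a i"
    using budget_A sum_mix_on[OF fin(1)] u(2) w(2) t by (auto simp: a_def mix_on_def)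
  then have value_A: "(\<Sum>i\<in>A. G i (a i)) \<le> budget_value G A"
    using fin bounded by (intro budget_value_upper) auto
  have "(\<Sum>i\<in>B. b i) \<le> 1" "\<forall>i\<in>B. 0 \<le> b i"
    using budget_B sum_mix_on[OF fin(2)] u(2) w(2) t by (auto simp: b_def mix_on_def Int_commute)
  then have value_B: "(\<Sum>i\<in>B. G i (b i)) \<le> budget_value G B"
    using fin bounded by (intro budget_value_upper) auto
  have "(\<Sum>i\<in>A \<union> B. G i (u i)) + (\<Sum>i\<in>A \<inter> B. G i (w i))
      = (\<Sum>i\<in>A - B. G i (u i)) + (\<Sum>i\<in>B - A. G i (u i)) + (\<Sum>i\<in>A \<inter> B. G i (u i) + G i (w i))"
    using sum.union_diff2[OF fin, of "\<lambda>i. G i (u i)"] by (simp add: sum.distrib)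
  also have "\<dots> \<le> (\<Sum>i\<in>A - B. G i (u i)) + (\<Sum>i\<in>B - A. G i (u i))
      + (\<Sum>i\<in>A \<inter> B. G i (t * u i + (1 - t) * w i) + G i ((1 - t) * u i + t * w i))"
    using concave_on_add_le_mix[OF concave] u(2) w(2) t by (auto intro!: sum_mono)
  also have "\<dots> = (\<Sum>i\<in>A. G i (a i)) + (\<Sum>i\<in>B. G i (b i))"
    unfolding a_def b_def sum_comp_mix_on[OF fin(1)] sum_comp_mix_on[OF fin(2)]
    by (simp add: Int_commute sum.distrib)
  also have "\<dots> \<le> budget_value G A + budget_value G B"
    using value_A value_B by (rule add_mono)
  finally show ?thesis .
qed

lemma budget_value_submodular:
  assumes "finite A" "finite B"
    and "\<And>i. i \<in> A \<union> B \<Longrightarrow> bdd_above (G i ` {0..})"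
    and "\<And>i. i \<in> A \<inter> B \<Longrightarrow> concave_on {0..} (G i)"
  shows "budget_value G (A \<union> B) + budget_value G (A \<inter> B) \<le> budget_value G A + budget_value G B"
proof -
  have "budget_value G (A \<union> B) \<le> budget_value G A + budget_value G B - (\<Sum>i\<in>A \<inter> B. G i (w i))"
    if "(\<Sum>i\<in>A \<inter> B. w i) \<le> 1" "\<forall>i\<in>A \<inter> B. 0 \<le> w i" for w
    using budget_value_exchange[OF assms _ _ that]
    by (intro budget_value_least) (simp add: algebra_simps)
  then have "budget_value G (A \<inter> B) \<le> budget_value G A + budget_value G B - budget_value G (A \<union> B)"
    by (intro budget_value_least) (simp add: algebra_simps)
  then show ?thesis
    by simp
qed

lemma convex_comb_cSup_le:
  fixes X Y :: "real set"
  assumes "X \<noteq> {}" "Y \<noteq> {}" "0 < s" "0 < r"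
    and bound: "\<And>a b. a \<in> X \<Longrightarrow> b \<in> Y \<Longrightarrow> s * a + r * b \<le> c"
  shows "s * Sup X + r * Sup Y \<le> c"
proof -
  have "r * b \<le> c - s * Sup X" if "b \<in> Y" for b
  proof -
    have "Sup X \<le> (c - r * b) / s"
      using assms(1,3) bound[OF _ that] by (intro cSup_least) (auto simp: field_simps)
    then show ?thesis
      using assms(3) by (simp add: field_simps)
  qed
  then have "Sup Y \<le> (c - s * Sup X) / r"
    using assms(2,4) by (intro cSup_least) (auto simp: field_simps)
  then show ?thesis
    using assms(4) by (simp add: field_simps)
qed

definition admissible ::
    "nat \<Rightarrow> nat \<Rightarrow> (nat \<Rightarrow> nat \<Rightarrow> real) \<Rightarrow> (nat \<Rightarrow> nat \<Rightarrow> real) \<Rightarrow> nat \<Rightarrow> real \<Rightarrow> (nat \<Rightarrow> real) \<Rightarrow> bool"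
  where
  "admissible n m q rho i z x \<longleftrightarrow>
     (\<Sum>j\<in>{1..m}. x j) \<le> z \<and>
     rhoE n m q rho * (\<Sum>j\<in>{1..m}. x j) \<le> (\<Sum>j\<in>{1..m}. x j * rho i j) \<and>
     (\<forall>j\<in>{1..m}. 0 \<le> x j \<and> x j \<le> q i j)"

definition admissible_values ::
    "nat \<Rightarrow> nat \<Rightarrow> (nat \<Rightarrow> nat \<Rightarrow> real) \<Rightarrow> (nat \<Rightarrow> nat \<Rightarrow> real) \<Rightarrow> (nat \<Rightarrow> nat \<Rightarrow> real)
      \<Rightarrow> nat \<Rightarrow> real \<Rightarrow> real set"
  where
  "admissible_values n m q rho xi i z =
     {\<Sum>j\<in>{1..m}. x j * xi i j | x. admissible n m q rho i z x}"

lemma gfun_eq_Sup_admissible_values: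
  "gfun n m q rho xi i z = Sup (admissible_values n m q rho xi i z)"
  unfolding gfun_def admissible_values_def admissible_def by simp

lemma admissible_zero:
  assumes "0 \<le> z" "\<And>j. j \<in> {1..m} \<Longrightarrow> 0 \<le> q i j"
  shows "admissible n m q rho i z (\<lambda>_. 0)"
  using assms by (simp add: admissible_def)

lemma admissible_convex_comb:
  assumes x1: "admissible n m q rho i z1 x1" and x2: "admissible n m q rho i z2 x2"
    and t: "0 \<le> t" "t \<le> 1"
  shows "admissible n m q rho i (t * z1 + (1 - t) * z2) (\<lambda>j. t * x1 j + (1 - t) * x2 j)"
proof -
  let ?R = "rhoE n m q rho"
  have lin: "(\<Sum>j\<in>{1..m}. (t * x1 j + (1 - t) * x2 j) * c j)
      = t * (\<Sum>j\<in>{1..m}. x1 j * c j) + (1 - t) * (\<Sum>j\<in>{1..m}. x2 j * c j)" for c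
    by (simp add: distrib_right sum.distrib sum_distrib_left mult.assoc)
  from lin[of "\<lambda>_. 1"] have total: "(\<Sum>j\<in>{1..m}. t * x1 j + (1 - t) * x2 j)
      = t * (\<Sum>j\<in>{1..m}. x1 j) + (1 - t) * (\<Sum>j\<in>{1..m}. x2 j)"
    by simp
  have "(\<Sum>j\<in>{1..m}. x1 j) \<le> z1" "(\<Sum>j\<in>{1..m}. x2 j) \<le> z2"
    using x1 x2 by (simp_all add: admissible_def)
  then have budget: "(\<Sum>j\<in>{1..m}. t * x1 j + (1 - t) * x2 j) \<le> t * z1 + (1 - t) * z2"
    unfolding total using t by (intro add_mono mult_left_mono) auto
  have "?R * (\<Sum>j\<in>{1..m}. x1 j) \<le> (\<Sum>j\<in>{1..m}. x1 j * rho i j)"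
    "?R * (\<Sum>j\<in>{1..m}. x2 j) \<le> (\<Sum>j\<in>{1..m}. x2 j * rho i j)"
    using x1 x2 by (simp_all add: admissible_def)
  then have "t * (?R * (\<Sum>j\<in>{1..m}. x1 j)) + (1 - t) * (?R * (\<Sum>j\<in>{1..m}. x2 j))
      \<le> t * (\<Sum>j\<in>{1..m}. x1 j * rho i j) + (1 - t) * (\<Sum>j\<in>{1..m}. x2 j * rho i j)"
    using t by (intro add_mono mult_left_mono) auto
  then have obedient: "?R * (\<Sum>j\<in>{1..m}. t * x1 j + (1 - t) * x2 j)
      \<le> (\<Sum>j\<in>{1..m}. (t * x1 j + (1 - t) * x2 j) * rho i j)"
    unfolding total lin by (simp add: algebra_simps)
  have "0 \<le> t * x1 j + (1 - t) * x2 j \<and> t * x1 j + (1 - t) * x2 j \<le> q i j" if "j \<in> {1..m}" for j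
    using x1 x2 t that by (auto simp: admissible_def intro!: convex_bound_le)
  then show ?thesis
    using budget obedient by (simp add: admissible_def)
qed

lemma admissible_value_le:
  assumes "admissible n m q rho i z x"
  shows "(\<Sum>j\<in>{1..m}. x j * xi i j) \<le> (\<Sum>j\<in>{1..m}. q i j * \<bar>xi i j\<bar>)"
proof (rule sum_mono)
  fix j assume "j \<in> {1..m}"
  then have "0 \<le> x j" "x j \<le> q i j"
    using assms by (auto simp: admissible_def)
  then have "x j * xi i j \<le> x j * \<bar>xi i j\<bar>" "x j * \<bar>xi i j\<bar> \<le> q i j * \<bar>xi i j\<bar>"
    by (auto intro: mult_left_mono mult_right_mono)
  then show "x j * xi i j \<le> q i j * \<bar>xi i j\<bar>"
    by linarith
qed

lemma bdd_above_admissible_values: "bdd_above (admissible_values n m q rho xi i z)"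
  unfolding bdd_above_def admissible_values_def using admissible_value_le by blast

lemma gfun_nonneg:
  assumes "0 \<le> z" "\<And>j. j \<in> {1..m} \<Longrightarrow> 0 \<le> q i j"
  shows "0 \<le> gfun n m q rho xi i z"
proof -
  have "admissible n m q rho i z (\<lambda>_. 0)"
    using assms by (rule admissible_zero)
  then have "0 \<in> admissible_values n m q rho xi i z"
    unfolding admissible_values_def by force
  then show ?thesis
    unfolding gfun_eq_Sup_admissible_values using bdd_above_admissible_values by (rule cSup_upper)
qed

lemma bdd_above_gfun:
  assumes "\<And>j. j \<in> {1..m} \<Longrightarrow> 0 \<le> q i j"
  shows "bdd_above (gfun n m q rho xi i ` {0..})"
proof (rule bdd_aboveI2)
  fix z :: real assume "z \<in> {0..}"
  then have "admissible n m q rho i z (\<lambda>_. 0)"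
    using assms by (intro admissible_zero) auto
  then have "admissible_values n m q rho xi i z \<noteq> {}"
    by (auto simp: admissible_values_def)
  then show "gfun n m q rho xi i z \<le> (\<Sum>j\<in>{1..m}. q i j * \<bar>xi i j\<bar>)"
    unfolding gfun_eq_Sup_admissible_values
    by (rule cSup_least) (use admissible_value_le in \<open>auto simp: admissible_values_def\<close>)
qed

lemma concave_on_gfun:
  assumes q: "\<And>j. j \<in> {1..m} \<Longrightarrow> 0 \<le> q i j"
  shows "concave_on {0..} (gfun n m q rho xi i)"
  unfolding concave_on_iff
proof (intro conjI ballI allI impI)
  let ?g = "gfun n m q rho xi i" and ?V = "admissible_values n m q rho xi i"
  show "convex {0::real..}"
    by (rule convex_real_interval)
  fix z1 z2 t s :: real
  assume z: "z1 \<in> {0..}" "z2 \<in> {0..}" and ts: "0 \<le> t" "0 \<le> s" "t + s = 1"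
  have nonempty: "?V z \<noteq> {}" if "0 \<le> z" for z
  proof -
    have "admissible n m q rho i z (\<lambda>_. 0)"
      using that q by (rule admissible_zero)
    then show ?thesis
      by (auto simp: admissible_values_def)
  qed
  consider "t = 0" | "s = 0" | "0 < t" "0 < s"
    using ts by linarith
  then show "t * ?g z1 + s * ?g z2 \<le> ?g (t *\<^sub>R z1 + s *\<^sub>R z2)"
  proof cases
    case 3
    from ts have "s = 1 - t"
      by simp
    show ?thesis
      unfolding gfun_eq_Sup_admissible_values
    proof (rule convex_comb_cSup_le[OF nonempty nonempty 3])
      fix a b assume "a \<in> ?V z1" "b \<in> ?V z2"
      then obtain x1 x2 where x: "admissible n m q rho i z1 x1" "admissible n m q rho i z2 x2"
        and a: "a = (\<Sum>j\<in>{1..m}. x1 j * xi i j)" and b: "b = (\<Sum>j\<in>{1..m}. x2 j * xi i j)"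
        by (auto simp: admissible_values_def)
      have "(\<Sum>j\<in>{1..m}. (t * x1 j + s * x2 j) * xi i j) = t * a + s * b"
        unfolding a b by (simp add: algebra_simps sum.distrib sum_distrib_left)
      moreover have "admissible n m q rho i (t * z1 + s * z2) (\<lambda>j. t * x1 j + s * x2 j)"
        using admissible_convex_comb[OF x, of t] ts unfolding \<open>s = 1 - t\<close> by simp
      ultimately have "t * a + s * b \<in> ?V (t *\<^sub>R z1 + s *\<^sub>R z2)"
        unfolding admissible_values_def by force
      then show "t * a + s * b \<le> Sup (?V (t *\<^sub>R z1 + s *\<^sub>R z2))"
        using bdd_above_admissible_values by (rule cSup_upper)
    qed (use z in auto)
  qed (use ts in auto)
qed

lemma ffun_eq_budget_value: "ffun n m q rho xi S = budget_value (gfun n m q rho xi) (S \<union> {n})"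
  unfolding ffun_def budget_value_def ..

theorem lemma4p3:
  fixes n m :: nat and q rho xi :: "nat \<Rightarrow> nat \<Rightarrow> real"
  assumes "n \<ge> 1"
    and q_nonneg: "\<And>i j. i \<in> {1..n} \<Longrightarrow> j \<in> {1..m} \<Longrightarrow> q i j \<ge> 0"
    and q_sum: "\<And>i. i \<in> {1..n} \<Longrightarrow> (\<Sum>j\<in>{1..m}. q i j) = 1"
  shows "(\<forall>S. S \<subseteq> {1..n-1} \<longrightarrow> ffun n m q rho xi S \<ge> 0)
    \<and> (\<forall>S T. S \<subseteq> T \<and> T \<subseteq> {1..n-1} \<longrightarrow> ffun n m q rho xi S \<le> ffun n m q rho xi T)
    \<and> (\<forall>S T. S \<subseteq> {1..n-1} \<and> T \<subseteq> {1..n-1} \<longrightarrow>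
          ffun n m q rho xi (S \<union> T) + ffun n m q rho xi (S \<inter> T)
            \<le> ffun n m q rho xi S + ffun n m q rho xi T)"
proof -
  let ?G = "gfun n m q rho xi"
  have actions: "S \<union> {n} \<subseteq> {1..n}" "finite (S \<union> {n})" if "S \<subseteq> {1..n-1}" for S
    using that \<open>n \<ge> 1\<close> finite_subset[OF that] by (auto dest!: subsetD)
  have "bdd_above (?G i ` {0..})" "0 \<le> ?G i 0" "concave_on {0..} (?G i)" if "i \<in> {1..n}" for i
    using q_nonneg[OF that] bdd_above_gfun gfun_nonneg[OF order_refl] concave_on_gfun by metis+
  note G = this[OF subsetD[OF actions(1)]]
  show ?thesis
    unfolding ffun_eq_budget_value
  proof (intro conjI allI impI)
    fix S assume S: "S \<subseteq> {1..n-1}"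
    show "0 \<le> budget_value ?G (S \<union> {n})"
      using actions(2)[OF S] G(1,2)[OF S] by (rule budget_value_nonneg)
  next
    fix S T assume "S \<subseteq> T \<and> T \<subseteq> {1..n-1}"
    then have "S \<union> {n} \<subseteq> T \<union> {n}" and T: "T \<subseteq> {1..n-1}"
      by auto
    from this(1) actions(2)[OF T] G(1,2)[OF T]
    show "budget_value ?G (S \<union> {n}) \<le> budget_value ?G (T \<union> {n})"
      by (rule budget_value_mono) auto
  next
    fix S T assume "S \<subseteq> {1..n-1} \<and> T \<subseteq> {1..n-1}"
    then have S: "S \<subseteq> {1..n-1}" and T: "T \<subseteq> {1..n-1}"
      by auto
    have "budget_value ?G ((S \<union> {n}) \<union> (T \<union> {n})) + budget_value ?G ((S \<union> {n}) \<inter> (T \<union> {n}))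
        \<le> budget_value ?G (S \<union> {n}) + budget_value ?G (T \<union> {n})"
      using actions(2)[OF S] actions(2)[OF T] G[OF S] G[OF T]
      by (intro budget_value_submodular) auto
    moreover have "(S \<union> {n}) \<union> (T \<union> {n}) = S \<union> T \<union> {n}" "(S \<union> {n}) \<inter> (T \<union> {n}) = S \<inter> T \<union> {n}"
      by auto
    ultimately show "budget_value ?G (S \<union> T \<union> {n}) + budget_value ?G (S \<inter> T \<union> {n})
        \<le> budget_value ?G (S \<union> {n}) + budget_value ?G (T \<union> {n})"
      by simp
  qed
qed

end
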